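(* For every ATL*_i formula φ and every concurrent game structure G in which each agent is assigned an equivalence relation on positions, it holds that G ⊨ φ iff G' ⊨ tr(φ).
   Context: ATL*_i is ATL* with imperfect-information, perfect-recall strategies (objective semantics), where each agent a_i has an indistinguishability relation; ⟨⟨A⟩⟩ψ means there are strategies for the agents in A such that ψ holds whatever the other agents do. tr : ATL*_i → SL_i (Strategy Logic with imperfect information) replaces each subformula ⟨⟨A⟩⟩ψ, with A = {a_1,…,a_k} and the remaining agents a_{k+1},…,a_n, by ∃^{o_1}x_1 … ∃^{o_k}x_k ∀^{o_p}x_{k+1} … ∀^{o_p}x_n (a_1,x_1)…(a_n,x_n) tr(ψ). G' is the concurrent game structure with imperfect information obtained from G by interpreting each observation symbol o_i as the equivalence relation of agent a_i in G, and o_p as the identity relation. In SL_i, ∃^o x quantifies over perfect-recall strategies uniform w.r.t. the relation denoted by o, (a,x) binds agent a to strategy x, and ∀^o x = ¬∃^o x ¬. *)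

theory Defs
  imports Main
begin

section \<open>Concurrent game structures (no protocol: every action available everywhere)\<close>

record ('ag, 'act, 'pos, 'ap) cgs =
  mv   :: "'pos \<Rightarrow> ('ag \<Rightarrow> 'act) \<Rightarrow> 'pos"
  lab  :: "'pos \<Rightarrow> 'ap set"
  init :: "'pos"

text \<open>Histories are nonempty lists of positions (current position = last element);
  plays are infinite sequences of positions. Strategies map histories to actions
  (perfect recall).\<close>

type_synonym ('pos, 'act) strat = "'pos list \<Rightarrow> 'act"

definition prefix_of :: "(nat \<Rightarrow> 'pos) \<Rightarrow> nat \<Rightarrow> 'pos list" where
  "prefix_of \<pi> i = map \<pi> [0..<Suc i]"

definition hist_indist :: "('pos \<times> 'pos) set \<Rightarrow> 'pos list \<Rightarrow> 'pos list \<Rightarrow> bool" where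
  "hist_indist R h h' \<longleftrightarrow> length h = length h' \<and> (\<forall>i<length h. (h ! i, h' ! i) \<in> R)"

definition uniform :: "('pos \<times> 'pos) set \<Rightarrow> ('pos, 'act) strat \<Rightarrow> bool" where
  "uniform R \<sigma> \<longleftrightarrow> (\<forall>h h'. hist_indist R h h' \<longrightarrow> \<sigma> h = \<sigma> h')"

datatype ('ap, 'ag) atl_state =
    SP 'ap
  | SNeg "('ap, 'ag) atl_state"
  | SDisj "('ap, 'ag) atl_state" "('ap, 'ag) atl_state"
  | Coal "'ag set" "('ap, 'ag) atl_path"
and ('ap, 'ag) atl_path =
    PState "('ap, 'ag) atl_state"
  | PNeg "('ap, 'ag) atl_path"
  | PDisj "('ap, 'ag) atl_path" "('ap, 'ag) atl_path"
  | PX "('ap, 'ag) atl_path"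
  | PU "('ap, 'ag) atl_path" "('ap, 'ag) atl_path"

definition Out :: "('ag, 'act, 'pos, 'ap) cgs \<Rightarrow> 'pos list \<Rightarrow> 'ag set
                    \<Rightarrow> ('ag \<Rightarrow> ('pos, 'act) strat) \<Rightarrow> (nat \<Rightarrow> 'pos) set" where
  "Out G h A \<sigma> = {\<pi>. (\<forall>i<length h. \<pi> i = h ! i) \<and>
      (\<forall>i\<ge>length h - 1. \<exists>c. (\<forall>a\<in>A. c a = \<sigma> a (prefix_of \<pi> i)) \<and> \<pi> (Suc i) = mv G (\<pi> i) c)}"

primrec atl_sat_state :: "('ag, 'act, 'pos, 'ap) cgs \<Rightarrow> ('ag \<Rightarrow> ('pos \<times> 'pos) set)
       \<Rightarrow> 'pos list \<Rightarrow> ('ap, 'ag) atl_state \<Rightarrow> bool"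
and atl_sat_path :: "('ag, 'act, 'pos, 'ap) cgs \<Rightarrow> ('ag \<Rightarrow> ('pos \<times> 'pos) set)
       \<Rightarrow> (nat \<Rightarrow> 'pos) \<Rightarrow> nat \<Rightarrow> ('ap, 'ag) atl_path \<Rightarrow> bool" where
  "atl_sat_state G R h (SP p) = (p \<in> lab G (last h))"
| "atl_sat_state G R h (SNeg \<phi>) = (\<not> atl_sat_state G R h \<phi>)"
| "atl_sat_state G R h (SDisj \<phi> \<psi>) = (atl_sat_state G R h \<phi> \<or> atl_sat_state G R h \<psi>)"
| "atl_sat_state G R h (Coal A \<psi>) =
     (\<exists>\<sigma>. (\<forall>a\<in>A. uniform (R a) (\<sigma> a)) \<and>
          (\<forall>\<pi>\<in>Out G h A \<sigma>. atl_sat_path G R \<pi> (length h - 1) \<psi>))"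
| "atl_sat_path G R \<pi> i (PState \<phi>) = atl_sat_state G R (prefix_of \<pi> i) \<phi>"
| "atl_sat_path G R \<pi> i (PNeg \<psi>) = (\<not> atl_sat_path G R \<pi> i \<psi>)"
| "atl_sat_path G R \<pi> i (PDisj \<psi> \<chi>) = (atl_sat_path G R \<pi> i \<psi> \<or> atl_sat_path G R \<pi> i \<chi>)"
| "atl_sat_path G R \<pi> i (PX \<psi>) = atl_sat_path G R \<pi> (Suc i) \<psi>"
| "atl_sat_path G R \<pi> i (PU \<psi> \<chi>) =
     (\<exists>k\<ge>i. atl_sat_path G R \<pi> k \<chi> \<and> (\<forall>j. i \<le> j \<and> j < k \<longrightarrow> atl_sat_path G R \<pi> j \<psi>))"

definition atl_models :: "('ag, 'act, 'pos, 'ap) cgs \<Rightarrow> ('ag \<Rightarrow> ('pos \<times> 'pos) set)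
       \<Rightarrow> ('ap, 'ag) atl_state \<Rightarrow> bool" where
  "atl_models G R \<phi> = atl_sat_state G R [init G] \<phi>"

datatype ('ap, 'ag, 'var, 'obs) sl =
    SLProp 'ap
  | SLNot "('ap, 'ag, 'var, 'obs) sl"
  | SLOr "('ap, 'ag, 'var, 'obs) sl" "('ap, 'ag, 'var, 'obs) sl"
  | SLX "('ap, 'ag, 'var, 'obs) sl"
  | SLU "('ap, 'ag, 'var, 'obs) sl" "('ap, 'ag, 'var, 'obs) sl"
  | SLEx 'obs 'var "('ap, 'ag, 'var, 'obs) sl"     (* \<exists>^o x \<phi> *)
  | SLBind 'ag 'var "('ap, 'ag, 'var, 'obs) sl"    (* (a,x) \<phi> *)

definition SLAll :: "'obs \<Rightarrow> 'var \<Rightarrow> ('ap, 'ag, 'var, 'obs) sl \<Rightarrow> ('ap, 'ag, 'var, 'obs) sl" where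
  "SLAll ob x \<phi> = SLNot (SLEx ob x (SLNot \<phi>))"

fun ext_hist :: "('ag, 'act, 'pos, 'ap) cgs \<Rightarrow> ('ag \<Rightarrow> ('pos, 'act) strat) \<Rightarrow> 'pos list \<Rightarrow> nat \<Rightarrow> 'pos list" where
  "ext_hist G \<beta> h 0 = h"
| "ext_hist G \<beta> h (Suc k) =
     (let h' = ext_hist G \<beta> h k in h' @ [mv G (last h') (\<lambda>a. \<beta> a h')])"

text \<open>Semantics at a history with an assignment: \<beta> binds agents, \<chi> binds variables.
  Temporal operators follow the unique outcome of the agent bindings.\<close>
primrec sl_sat :: "('ag, 'act, 'pos, 'ap) cgs \<Rightarrow> ('obs \<Rightarrow> ('pos \<times> 'pos) set)
     \<Rightarrow> ('ag \<Rightarrow> ('pos, 'act) strat) \<Rightarrow> ('var \<Rightarrow> ('pos, 'act) strat)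
     \<Rightarrow> 'pos list \<Rightarrow> ('ap, 'ag, 'var, 'obs) sl \<Rightarrow> bool" where
  "sl_sat G Obs \<beta> \<chi> h (SLProp p) = (p \<in> lab G (last h))"
| "sl_sat G Obs \<beta> \<chi> h (SLNot \<phi>) = (\<not> sl_sat G Obs \<beta> \<chi> h \<phi>)"
| "sl_sat G Obs \<beta> \<chi> h (SLOr \<phi> \<psi>) = (sl_sat G Obs \<beta> \<chi> h \<phi> \<or> sl_sat G Obs \<beta> \<chi> h \<psi>)"
| "sl_sat G Obs \<beta> \<chi> h (SLX \<phi>) = sl_sat G Obs \<beta> \<chi> (ext_hist G \<beta> h 1) \<phi>"
| "sl_sat G Obs \<beta> \<chi> h (SLU \<phi> \<psi>) =
     (\<exists>k. sl_sat G Obs \<beta> \<chi> (ext_hist G \<beta> h k) \<psi> \<and>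
          (\<forall>j<k. sl_sat G Obs \<beta> \<chi> (ext_hist G \<beta> h j) \<phi>))"
| "sl_sat G Obs \<beta> \<chi> h (SLEx ob x \<phi>) = (\<exists>\<sigma>. uniform (Obs ob) \<sigma> \<and> sl_sat G Obs \<beta> (\<chi>(x := \<sigma>)) h \<phi>)"
| "sl_sat G Obs \<beta> \<chi> h (SLBind a x \<phi>) = sl_sat G Obs (\<beta>(a := \<chi> x)) \<chi> h \<phi>"

text \<open>Model relation for sentences: evaluated at the initial position; since the
  assignment is total we quantify over all of them (irrelevant for sentences).\<close>
definition sl_models :: "('ag, 'act, 'pos, 'ap) cgs \<Rightarrow> ('obs \<Rightarrow> ('pos \<times> 'pos) set)
     \<Rightarrow> ('ap, 'ag, 'var, 'obs) sl \<Rightarrow> bool" where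
  "sl_models G Obs \<phi> = (\<forall>\<beta> \<chi>. sl_sat G Obs \<beta> \<chi> [init G] \<phi>)"

text \<open>Observation symbols: o_a for each agent a, and o_p (perfect information).\<close>
datatype 'ag obs_sym = ObsAg 'ag | ObsP

fun obs_interp :: "('ag \<Rightarrow> ('pos \<times> 'pos) set) \<Rightarrow> 'ag obs_sym \<Rightarrow> ('pos \<times> 'pos) set" where
  "obs_interp R (ObsAg a) = R a"
| "obs_interp R ObsP = Id"

text \<open>Variables are indexed by agents: x_a is the variable of agent a.
  Agents are enumerated by the enum class list.\<close>
definition coal_prefix :: "'ag::enum set \<Rightarrow> ('ap, 'ag, 'ag, 'ag obs_sym) sl \<Rightarrow> ('ap, 'ag, 'ag, 'ag obs_sym) sl" where
  "coal_prefix A \<phi> =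
     foldr (\<lambda>a f. SLEx (ObsAg a) a f) (filter (\<lambda>a. a \<in> A) Enum.enum)
      (foldr (\<lambda>a f. SLAll ObsP a f) (filter (\<lambda>a. a \<notin> A) Enum.enum)
        (foldr (\<lambda>a f. SLBind a a f) Enum.enum \<phi>))"

primrec tr_state :: "('ap, 'ag::enum) atl_state \<Rightarrow> ('ap, 'ag, 'ag, 'ag obs_sym) sl"
and tr_path :: "('ap, 'ag::enum) atl_path \<Rightarrow> ('ap, 'ag, 'ag, 'ag obs_sym) sl" where
  "tr_state (SP p) = SLProp p"
| "tr_state (SNeg \<phi>) = SLNot (tr_state \<phi>)"
| "tr_state (SDisj \<phi> \<psi>) = SLOr (tr_state \<phi>) (tr_state \<psi>)"
| "tr_state (Coal A \<psi>) = coal_prefix A (tr_path \<psi>)"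
| "tr_path (PState \<phi>) = tr_state \<phi>"
| "tr_path (PNeg \<psi>) = SLNot (tr_path \<psi>)"
| "tr_path (PDisj \<psi> \<chi>) = SLOr (tr_path \<psi>) (tr_path \<chi>)"
| "tr_path (PX \<psi>) = SLX (tr_path \<psi>)"
| "tr_path (PU \<psi> \<chi>) = SLU (tr_path \<psi>) (tr_path \<chi>)"

end

theory Submission
  imports Defs
begin

text \<open>Once all agents are bound, an SL formula is evaluated along the unique outcome of
  the binding, so a path formula at position \<open>i\<close> of a play \<open>\<pi>\<close> corresponds to its
  translation at a history \<open>h\<close> whenever \<open>\<pi>\<close> continues from \<open>i\<close> as the outcome of the
  binding from \<open>h\<close>. With this invariant the translation is compositional, and the only
  real case is the strategy quantifier: the ATL outcomes of a uniform coalition strategy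
  \<open>\<sigma>\<close> are exactly the outcomes of the complete profiles that extend \<open>\<sigma>\<close> by arbitrary
  strategies of the other agents, and these are what \<open>\<forall>\<^sup>o\<^sup>p\<close> ranges over, since uniformity
  with respect to the identity is no restriction.\<close>

lemma ext_hist_length [simp]: "length (ext_hist G \<beta> h k) = length h + k"
  by (induction k) (auto simp: Let_def)

lemma ext_hist_add: "ext_hist G \<beta> h (k + m) = ext_hist G \<beta> (ext_hist G \<beta> h k) m"
  by (induction m) (auto simp: Let_def)

lemma take_ext_hist: "take (length h + k) (ext_hist G \<beta> h (k + m)) = ext_hist G \<beta> h k"
  by (induction m) (auto simp: Let_def)

lemma ext_hist_nth_mono:
  assumes "j < length h + k" and "k \<le> m"
  shows "ext_hist G \<beta> h m ! j = ext_hist G \<beta> h k ! j"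
proof -
  have "ext_hist G \<beta> h m ! j = take (length h + k) (ext_hist G \<beta> h (k + (m - k))) ! j"
    using assms by (simp add: nth_take)
  then show ?thesis
    by (simp only: take_ext_hist)
qed

definition outcome :: "('ag, 'act, 'pos, 'ap) cgs \<Rightarrow> ('ag \<Rightarrow> ('pos, 'act) strat)
    \<Rightarrow> 'pos list \<Rightarrow> nat \<Rightarrow> 'pos" where
  "outcome G \<beta> h j = ext_hist G \<beta> h j ! j"

lemma ext_hist_nth:
  assumes "h \<noteq> []" and "j < length h + k"
  shows "ext_hist G \<beta> h k ! j = outcome G \<beta> h j"
proof -
  have "ext_hist G \<beta> h k ! j = ext_hist G \<beta> h (max j k) ! j"
    using assms by (intro ext_hist_nth_mono[symmetric]) auto
  also have "\<dots> = ext_hist G \<beta> h j ! j"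
    using assms by (intro ext_hist_nth_mono) auto
  finally show ?thesis
    by (simp add: outcome_def)
qed

definition follows :: "('ag, 'act, 'pos, 'ap) cgs \<Rightarrow> ('ag \<Rightarrow> ('pos, 'act) strat)
    \<Rightarrow> 'pos list \<Rightarrow> (nat \<Rightarrow> 'pos) \<Rightarrow> nat \<Rightarrow> bool" where
  "follows G \<beta> h \<pi> i \<longleftrightarrow> (\<forall>k. prefix_of \<pi> (i + k) = ext_hist G \<beta> h k)"

lemma prefix_of_Suc: "prefix_of \<pi> (Suc n) = prefix_of \<pi> n @ [\<pi> (Suc n)]"
  by (simp add: prefix_of_def)

lemma last_prefix_of [simp]: "last (prefix_of \<pi> n) = \<pi> n"
  by (simp add: prefix_of_def)

lemma follows_prefix_of: "follows G \<beta> h \<pi> i \<Longrightarrow> prefix_of \<pi> i = h"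
  unfolding follows_def by (metis add_0_right ext_hist.simps(1))

lemma follows_ext_hist:
  "follows G \<beta> h \<pi> i \<Longrightarrow> follows G \<beta> (ext_hist G \<beta> h k) \<pi> (i + k)"
  unfolding follows_def by (metis add.assoc ext_hist_add)

lemma follows_outcome:
  assumes "h \<noteq> []"
  shows "follows G \<beta> h (outcome G \<beta> h) (length h - 1)"
  unfolding follows_def
proof
  fix k
  have len: "Suc (length h - 1 + k) = length h + k"
    using assms by simp
  show "prefix_of (outcome G \<beta> h) (length h - 1 + k) = ext_hist G \<beta> h k"
  proof (rule nth_equalityI)
    fix j
    assume "j < length (prefix_of (outcome G \<beta> h) (length h - 1 + k))"
    then have "j < length h + k"
      using len by (simp add: prefix_of_def)
    then show "prefix_of (outcome G \<beta> h) (length h - 1 + k) ! j = ext_hist G \<beta> h k ! j"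
      using assms by (simp add: prefix_of_def ext_hist_nth del: upt_Suc)
  qed (use len in \<open>simp add: prefix_of_def\<close>)
qed

lemma outcome_in_Out:
  assumes "h \<noteq> []" and "\<forall>a\<in>A. \<beta> a = \<sigma> a"
  shows "outcome G \<beta> h \<in> Out G h A \<sigma>"
proof -
  let ?\<pi> = "outcome G \<beta> h"
  have hist: "prefix_of ?\<pi> (length h - 1 + k) = ext_hist G \<beta> h k" for k
    using follows_outcome[OF assms(1)] unfolding follows_def by blast
  have step: "?\<pi> (Suc i) = mv G (?\<pi> i) (\<lambda>a. \<beta> a (prefix_of ?\<pi> i))"
    if "i \<ge> length h - 1" for i
  proof -
    define k where "k = i - (length h - 1)"
    have i: "i = length h - 1 + k"
      using that by (simp add: k_def)
    have "?\<pi> (Suc i) = last (prefix_of ?\<pi> (length h - 1 + Suc k))"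
      by (simp add: i)
    also have "\<dots> = mv G (last (ext_hist G \<beta> h k)) (\<lambda>a. \<beta> a (ext_hist G \<beta> h k))"
      unfolding hist by (simp add: Let_def)
    finally show ?thesis
      unfolding i hist[symmetric] last_prefix_of .
  qed
  have start: "?\<pi> i = h ! i" if "i < length h" for i
    using ext_hist_nth[OF assms(1), of i 0 G \<beta>] that by simp
  show ?thesis
    unfolding Out_def mem_Collect_eq
  proof (intro conjI allI impI)
    fix i
    assume "length h - 1 \<le> i"
    then show "\<exists>c. (\<forall>a\<in>A. c a = \<sigma> a (prefix_of ?\<pi> i)) \<and> ?\<pi> (Suc i) = mv G (?\<pi> i) c"
      using step assms(2) by (intro exI[of _ "\<lambda>a. \<beta> a (prefix_of ?\<pi> i)"]) simp
  qed (simp add: start)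
qed

text \<open>The other agents' strategies are read off the play: at a history of length \<open>n + 1\<close>
  they play the joint action that the play uses at step \<open>n\<close>.\<close>

lemma Out_follows:
  assumes "h \<noteq> []" and "\<pi> \<in> Out G h A \<sigma>"
  shows "\<exists>\<tau>. follows G (override_on \<tau> \<sigma> A) h \<pi> (length h - 1)"
proof -
  from assms(2) have start: "\<forall>i<length h. \<pi> i = h ! i"
    and "\<forall>i\<ge>length h - 1. \<exists>c. (\<forall>a\<in>A. c a = \<sigma> a (prefix_of \<pi> i)) \<and> \<pi> (Suc i) = mv G (\<pi> i) c"
    unfolding Out_def by auto
  then obtain C where C: "\<And>i. i \<ge> length h - 1 \<Longrightarrow>
      (\<forall>a\<in>A. C i a = \<sigma> a (prefix_of \<pi> i)) \<and> \<pi> (Suc i) = mv G (\<pi> i) (C i)"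
    by metis
  define \<beta> where "\<beta> = override_on (\<lambda>a hs. C (length hs - 1) a) \<sigma> A"
  have "prefix_of \<pi> (length h - 1 + k) = ext_hist G \<beta> h k" for k
  proof (induction k)
    case 0
    show ?case
      using assms(1) start
      by (intro nth_equalityI) (auto simp: prefix_of_def nth_map_upt simp del: upt_Suc)
  next
    case (Suc k)
    define n where "n = length h - 1 + k"
    have "(\<lambda>a. \<beta> a (prefix_of \<pi> n)) = C n"
      using C[of n] by (auto simp: n_def \<beta>_def override_on_def prefix_of_def)
    then have "ext_hist G \<beta> h (Suc k) = prefix_of \<pi> n @ [\<pi> (Suc n)]"
      using Suc.IH[symmetric] C[of n] by (simp add: n_def Let_def)
    then show ?case
      by (simp add: n_def prefix_of_Suc)
  qed
  then show ?thesis
    unfolding follows_def \<beta>_def by blast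
qed

lemma sl_sat_foldr_SLBind:
  "sl_sat G Obs \<beta> \<chi> h (foldr (\<lambda>a. SLBind a a) xs \<phi>)
     \<longleftrightarrow> sl_sat G Obs (override_on \<beta> \<chi> (set xs)) \<chi> h \<phi>"
  by (induction xs arbitrary: \<beta>) (simp_all add: override_on_insert')

lemma sl_sat_foldr_SLEx:
  "sl_sat G Obs \<beta> \<chi> h (foldr (\<lambda>a. SLEx (ob a) a) xs \<phi>)
     \<longleftrightarrow> (\<exists>\<tau>. (\<forall>a\<in>set xs. uniform (Obs (ob a)) (\<tau> a)) \<and>
            sl_sat G Obs \<beta> (override_on \<chi> \<tau> (set xs)) h \<phi>)"
proof (induction xs arbitrary: \<chi>)
  case Nil
  then show ?case by simp
next
  case (Cons x xs)
  show ?case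
  proof
    assume "sl_sat G Obs \<beta> \<chi> h (foldr (\<lambda>a. SLEx (ob a) a) (x # xs) \<phi>)"
    then obtain \<sigma> where unif_x: "uniform (Obs (ob x)) \<sigma>"
      and "sl_sat G Obs \<beta> (\<chi>(x := \<sigma>)) h (foldr (\<lambda>a. SLEx (ob a) a) xs \<phi>)"
      by auto
    moreover from this(2) obtain \<tau> where unif: "\<forall>a\<in>set xs. uniform (Obs (ob a)) (\<tau> a)"
      and sat: "sl_sat G Obs \<beta> (override_on (\<chi>(x := \<sigma>)) \<tau> (set xs)) h \<phi>"
      using Cons.IH by blast
    define \<tau>' where "\<tau>' = override_on (\<chi>(x := \<sigma>)) \<tau> (set xs)"
    have "override_on \<chi> \<tau>' (set (x # xs)) = \<tau>'"
      by (auto simp: \<tau>'_def override_on_def)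
    moreover have "\<forall>a\<in>set (x # xs). uniform (Obs (ob a)) (\<tau>' a)"
      using unif_x unif by (auto simp: \<tau>'_def override_on_def)
    ultimately show "\<exists>\<tau>. (\<forall>a\<in>set (x # xs). uniform (Obs (ob a)) (\<tau> a)) \<and>
        sl_sat G Obs \<beta> (override_on \<chi> \<tau> (set (x # xs))) h \<phi>"
      using sat unfolding \<tau>'_def by metis
  next
    assume "\<exists>\<tau>. (\<forall>a\<in>set (x # xs). uniform (Obs (ob a)) (\<tau> a)) \<and>
        sl_sat G Obs \<beta> (override_on \<chi> \<tau> (set (x # xs))) h \<phi>"
    then obtain \<tau> where unif: "\<forall>a\<in>set (x # xs). uniform (Obs (ob a)) (\<tau> a)"
      and "sl_sat G Obs \<beta> (override_on \<chi> \<tau> (set (x # xs))) h \<phi>"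
      by blast
    then have "sl_sat G Obs \<beta> (\<chi>(x := \<tau> x)) h (foldr (\<lambda>a. SLEx (ob a) a) xs \<phi>)"
      unfolding Cons.IH by (auto simp: override_on_insert')
    then show "sl_sat G Obs \<beta> \<chi> h (foldr (\<lambda>a. SLEx (ob a) a) (x # xs) \<phi>)"
      using unif by auto
  qed
qed

lemma sl_sat_foldr_SLAll_iff_not_SLEx:
  "sl_sat G Obs \<beta> \<chi> h (foldr (\<lambda>a. SLAll ob a) xs \<phi>)
     \<longleftrightarrow> \<not> sl_sat G Obs \<beta> \<chi> h (foldr (\<lambda>a. SLEx ob a) xs (SLNot \<phi>))"
  by (induction xs arbitrary: \<chi>) (simp_all add: SLAll_def)

lemma sl_sat_foldr_SLAll:
  "sl_sat G Obs \<beta> \<chi> h (foldr (\<lambda>a. SLAll ob a) xs \<phi>)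
     \<longleftrightarrow> (\<forall>\<tau>. (\<forall>a\<in>set xs. uniform (Obs ob) (\<tau> a)) \<longrightarrow>
            sl_sat G Obs \<beta> (override_on \<chi> \<tau> (set xs)) h \<phi>)"
  by (auto simp: sl_sat_foldr_SLAll_iff_not_SLEx sl_sat_foldr_SLEx[where ob = "\<lambda>_. ob"])

lemma uniform_Id: "uniform Id \<sigma>"
  by (auto simp: uniform_def hist_indist_def intro!: arg_cong[where f = \<sigma>] nth_equalityI)

lemma sl_sat_coal_prefix:
  "sl_sat G (obs_interp R) \<beta> \<chi> h (coal_prefix A \<phi>)
     \<longleftrightarrow> (\<exists>\<sigma>. (\<forall>a\<in>A. uniform (R a) (\<sigma> a)) \<and>
            (\<forall>\<tau>. sl_sat G (obs_interp R) (override_on \<tau> \<sigma> A) (override_on \<tau> \<sigma> A) h \<phi>))"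
proof -
  have agents: "set (filter (\<lambda>a. a \<in> A) Enum.enum) = A"
    "set (filter (\<lambda>a. a \<notin> A) Enum.enum) = - A" "set (Enum.enum :: 'a list) = UNIV"
    by (auto simp: enum_UNIV)
  have "override_on (override_on \<chi> \<sigma> A) \<tau> (- A) = override_on \<tau> \<sigma> A" for \<sigma> \<tau>
    by (auto simp: override_on_def)
  moreover have "override_on \<beta> \<chi>' UNIV = \<chi>'" for \<chi>'
    by (simp add: override_on_def)
  ultimately show ?thesis
    unfolding coal_prefix_def sl_sat_foldr_SLEx sl_sat_foldr_SLAll sl_sat_foldr_SLBind agents
    by (simp add: uniform_Id)
qed

lemma sl_sat_tr_Coal:
  assumes "h \<noteq> []"
    and path: "\<And>\<beta> \<chi> \<pi>. follows G \<beta> h \<pi> (length h - 1) \<Longrightarrow>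
      sl_sat G (obs_interp R) \<beta> \<chi> h (tr_path \<psi>) \<longleftrightarrow> atl_sat_path G R \<pi> (length h - 1) \<psi>"
  shows "sl_sat G (obs_interp R) \<beta> \<chi> h (tr_state (Coal A \<psi>)) \<longleftrightarrow> atl_sat_state G R h (Coal A \<psi>)"
proof -
  have "(\<forall>\<tau>. sl_sat G (obs_interp R) (override_on \<tau> \<sigma> A) (override_on \<tau> \<sigma> A) h (tr_path \<psi>))
    \<longleftrightarrow> (\<forall>\<pi>\<in>Out G h A \<sigma>. atl_sat_path G R \<pi> (length h - 1) \<psi>)" for \<sigma>
  proof
    assume "\<forall>\<tau>. sl_sat G (obs_interp R) (override_on \<tau> \<sigma> A) (override_on \<tau> \<sigma> A) h (tr_path \<psi>)"
    then show "\<forall>\<pi>\<in>Out G h A \<sigma>. atl_sat_path G R \<pi> (length h - 1) \<psi>"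
      using Out_follows[OF assms(1)] path by blast
  next
    assume "\<forall>\<pi>\<in>Out G h A \<sigma>. atl_sat_path G R \<pi> (length h - 1) \<psi>"
    moreover have "outcome G (override_on \<tau> \<sigma> A) h \<in> Out G h A \<sigma>" for \<tau>
      using assms(1) by (simp add: outcome_in_Out)
    ultimately show "\<forall>\<tau>. sl_sat G (obs_interp R) (override_on \<tau> \<sigma> A) (override_on \<tau> \<sigma> A) h (tr_path \<psi>)"
      using follows_outcome[OF assms(1)] path by blast
  qed
  then show ?thesis
    by (simp add: sl_sat_coal_prefix)
qed

lemma ex_until_shift_iff:
  fixes i :: nat
  shows "(\<exists>k\<ge>i. P k \<and> (\<forall>j. i \<le> j \<and> j < k \<longrightarrow> Q j)) \<longleftrightarrow> (\<exists>k. P (i + k) \<and> (\<forall>j<k. Q (i + j)))"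
proof
  assume "\<exists>k\<ge>i. P k \<and> (\<forall>j. i \<le> j \<and> j < k \<longrightarrow> Q j)"
  then obtain k where "i \<le> k" "P k" "\<forall>j. i \<le> j \<and> j < k \<longrightarrow> Q j"
    by blast
  then show "\<exists>k. P (i + k) \<and> (\<forall>j<k. Q (i + j))"
    by (intro exI[of _ "k - i"]) simp
next
  assume "\<exists>k. P (i + k) \<and> (\<forall>j<k. Q (i + j))"
  then obtain k where "P (i + k)" "\<forall>j<k. Q (i + j)"
    by blast
  moreover have "Q j" if "i \<le> j" "j < i + k" for j
    using \<open>\<forall>j<k. Q (i + j)\<close> that by (metis add_diff_inverse_nat add_less_cancel_left not_le)
  ultimately show "\<exists>k\<ge>i. P k \<and> (\<forall>j. i \<le> j \<and> j < k \<longrightarrow> Q j)"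
    by (intro exI[of _ "i + k"]) auto
qed

lemma sl_sat_tr:
  fixes G :: "('ag::enum, 'act, 'pos, 'ap) cgs"
  shows "h \<noteq> [] \<Longrightarrow>
      sl_sat G (obs_interp R) \<beta> \<chi> h (tr_state \<phi>) \<longleftrightarrow> atl_sat_state G R h \<phi>"
    and "follows G \<beta> h \<pi> i \<Longrightarrow>
      sl_sat G (obs_interp R) \<beta> \<chi> h (tr_path \<psi>) \<longleftrightarrow> atl_sat_path G R \<pi> i \<psi>"
proof (induction \<phi> and \<psi> arbitrary: h \<beta> \<chi> and \<pi> i h \<beta> \<chi>)
  case (Coal A \<psi>)
  then show ?case
    using sl_sat_tr_Coal by blast
next
  case (PState \<phi>)
  have h: "h = prefix_of \<pi> i"
    using follows_prefix_of[OF PState.prems] by simp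
  moreover have "h \<noteq> []"
    unfolding h prefix_of_def by simp
  ultimately show ?case
    using PState.IH by simp
next
  case (PX \<psi>)
  then show ?case
    using follows_ext_hist[OF PX.prems, of 1] by simp
next
  case (PU \<psi>1 \<psi>2)
  have "sl_sat G (obs_interp R) \<beta> \<chi> (ext_hist G \<beta> h k) (tr_path \<psi>1) \<longleftrightarrow> atl_sat_path G R \<pi> (i + k) \<psi>1"
    and "sl_sat G (obs_interp R) \<beta> \<chi> (ext_hist G \<beta> h k) (tr_path \<psi>2) \<longleftrightarrow> atl_sat_path G R \<pi> (i + k) \<psi>2"
    for k
    using PU.IH follows_ext_hist[OF PU.prems, of k] by blast+
  then show ?case
    by (simp add: ex_until_shift_iff)
qed simp_all

theorem proposition2:
  fixes G :: "('ag::enum, 'act, 'pos, 'ap) cgs"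
    and R :: "'ag \<Rightarrow> ('pos \<times> 'pos) set"
    and \<phi> :: "('ap, 'ag) atl_state"
  assumes "finite (UNIV :: 'pos set)" and "finite (UNIV :: 'act set)"
    and "\<forall>a. equiv UNIV (R a)"
  shows "atl_models G R \<phi> \<longleftrightarrow> sl_models G (obs_interp R) (tr_state \<phi>)"
  using sl_sat_tr(1)[of "[init G]" G R] unfolding atl_models_def sl_models_def by simp

end
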